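(* Let $\kappa$ be an infinitesimal character of the gap-insertion Hopf algebra $\mathbf{H}$ of noncrossing partitions, and let $K$ be the character of the block-substitution bialgebra $\mathbf{B}$ with $K(P)=\kappa(P)$ for every nonempty noncrossing partition $P$. Let $e$ be the infinitesimal character of $\mathbf{H}$ with $e(P)=1$ if $P$ is a noncrossing partition with exactly one block and $e(P)=0$ for all other noncrossing partitions. Then $$\kappa=e\curvearrowleft K,$$ where $(\alpha\curvearrowleft\phi):=(\alpha\otimes\phi)\circ\rho$ for a linear form $\alpha$ on $\mathbf{H}$ and a character $\phi$ of $\mathbf{B}$.
   Context: Noncrossing partitions of $[n]$: no $a<c<b<d$ with $a,b$ in one block and $c,d$ in another; partitions of linearly ordered finite sets are identified with partitions of $[m]$ via the order-preserving bijection; $P_{|X}$ is the induced partition. $\mathbf{H}$ is the free associative unital algebra on nonempty noncrossing partitions (its Hopf structure is the gap-insertion coproduct; only its algebra structure and counit matter here: the counit $\varepsilon$ is $1$ on $\mathbf 1$ and $0$ on nonempty monomials). An infinitesimal character of $\mathbf{H}$ is a linear form $f$ with $f(xy)=f(x)\varepsilon(y)+\varepsilon(x)f(y)$, i.e. vanishing on $\mathbf 1$ and on products of two nonempty monomials. $\mathbf{B}$ is the free commutative unital algebra on nonempty noncrossing partitions; a character of $\mathbf B$ is a unital algebra homomorphism to $\mathbb K$. For noncrossing $P\leq Q$ (refinement) with $Q=\{\tau_1,\dots,\tau_l\}$, $P/Q=P_{|\tau_1}\cdots P_{|\tau_l}\in\mathbf{B}$. The coaction $\rho:\mathbf{H}\to\mathbf{H}\otimes\mathbf{B}$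 is the algebra morphism with $\rho(P)=\sum_{Q\geq P\text{ noncrossing}}Q\otimes P/Q$. *)

theory Defs
  imports Main "HOL-Library.Multiset" "HOL-Library.Groups_Big_Fun"
begin

type_synonym ncpart = "nat set set"

definition is_partition :: "nat set \<Rightarrow> ncpart \<Rightarrow> bool" where
  "is_partition S P \<longleftrightarrow> (\<forall>B\<in>P. B \<noteq> {}) \<and> \<Union>P = S \<and>
     (\<forall>B\<in>P. \<forall>C\<in>P. B \<noteq> C \<longrightarrow> B \<inter> C = {})"

definition noncrossing :: "ncpart \<Rightarrow> bool" where
  "noncrossing P \<longleftrightarrow> \<not> (\<exists>B\<in>P. \<exists>C\<in>P. B \<noteq> C \<and>
     (\<exists>a b c d. a < c \<and> c < b \<and> b < d \<and> a \<in> B \<and> b \<in> B \<and> c \<in> C \<and> d \<in> C))"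

definition ncp :: "nat \<Rightarrow> ncpart \<Rightarrow> bool" where
  "ncp n P \<longleftrightarrow> is_partition {1..n} P \<and> noncrossing P"

text \<open>Nonempty noncrossing partitions: the generators of H and B.\<close>
definition nenc :: "ncpart \<Rightarrow> bool" where
  "nenc P \<longleftrightarrow> (\<exists>n\<ge>1. ncp n P)"

text \<open>Basis monomials: words (for the free algebra H) and multisets (for the free
  commutative algebra B) of nonempty noncrossing partitions.\<close>
definition valid_word :: "ncpart list \<Rightarrow> bool" where
  "valid_word w \<longleftrightarrow> (\<forall>P\<in>set w. nenc P)"

definition valid_mset :: "ncpart multiset \<Rightarrow> bool" where
  "valid_mset m \<longleftrightarrow> (\<forall>P\<in>#m. nenc P)"

text \<open>Linear forms on H are given by their values on the basis of words;
  characters of B by their values on the basis of multisets.\<close>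
definition inf_char :: "(ncpart list \<Rightarrow> 'a::field) \<Rightarrow> bool" where
  "inf_char f \<longleftrightarrow> f [] = 0 \<and>
     (\<forall>u v. valid_word u \<and> valid_word v \<and> u \<noteq> [] \<and> v \<noteq> [] \<longrightarrow> f (u @ v) = 0)"

definition char_B :: "(ncpart multiset \<Rightarrow> 'a::field) \<Rightarrow> bool" where
  "char_B phi \<longleftrightarrow> phi {#} = 1 \<and>
     (\<forall>m1 m2. valid_mset m1 \<and> valid_mset m2 \<longrightarrow> phi (m1 + m2) = phi m1 * phi m2)"

definition e_one :: "ncpart list \<Rightarrow> 'a::field" where
  "e_one w = (if \<exists>P. w = [P] \<and> nenc P \<and> card P = 1 then 1 else 0)"

definition refines :: "ncpart \<Rightarrow> ncpart \<Rightarrow> bool" where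
  "refines P Q \<longleftrightarrow> (\<forall>B\<in>P. \<exists>C\<in>Q. B \<subseteq> C)"

definition rank_in :: "nat set \<Rightarrow> nat \<Rightarrow> nat" where
  "rank_in X x = card {y\<in>X. y < x} + 1"

definition restr :: "ncpart \<Rightarrow> nat set \<Rightarrow> ncpart" where
  "restr P X = (\<lambda>B. rank_in X ` B) ` ((\<lambda>B. B \<inter> X) ` P - {{}})"

definition quot :: "ncpart \<Rightarrow> ncpart \<Rightarrow> ncpart multiset" where
  "quot P Q = image_mset (restr P) (mset_set Q)"

definition coarsenings :: "ncpart \<Rightarrow> ncpart set" where
  "coarsenings P = {Q. ncp (card (\<Union>P)) Q \<and> refines P Q}"

text \<open>Elements of H \<otimes> B as coefficient functions on the basis (word, multiset),
  with the product of the tensor product algebra (convolution).\<close>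
type_synonym 'a tensor = "ncpart list \<times> ncpart multiset \<Rightarrow> 'a"

definition tmul :: "'a::field tensor \<Rightarrow> 'a tensor \<Rightarrow> 'a tensor" where
  "tmul x y = (\<lambda>(w, m). \<Sum>i\<le>length w. \<Sum>m1\<in>{m1. m1 \<subseteq># m}.
       x (take i w, m1) * y (drop i w, m - m1))"

definition tone :: "'a::field tensor" where
  "tone = (\<lambda>(w, m). if w = [] \<and> m = {#} then 1 else 0)"

text \<open>rho(P) = sum over noncrossing Q \<ge> P of Q \<otimes> P/Q, extended multiplicatively.\<close>
definition rho_gen :: "ncpart \<Rightarrow> 'a::field tensor" where
  "rho_gen P = (\<lambda>(w, m). if \<exists>Q. w = [Q] \<and> Q \<in> coarsenings P \<and> m = quot P Q then 1 else 0)"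

definition rho :: "ncpart list \<Rightarrow> 'a::field tensor" where
  "rho w = foldr (\<lambda>P acc. tmul (rho_gen P) acc) w tone"

definition tensor_apply :: "(ncpart list \<Rightarrow> 'a::field) \<Rightarrow> (ncpart multiset \<Rightarrow> 'a) \<Rightarrow> 'a tensor \<Rightarrow> 'a" where
  "tensor_apply alpha phi X = Sum_any (\<lambda>(w, m). X (w, m) * alpha w * phi m)"

definition act_left :: "(ncpart list \<Rightarrow> 'a::field) \<Rightarrow> (ncpart multiset \<Rightarrow> 'a) \<Rightarrow> ncpart list \<Rightarrow> 'a" where
  "act_left alpha phi w = tensor_apply alpha phi (rho w)"

end

theory Submission
  imports Defs
begin

text \<open>
  The coaction \<rho> preserves the length of words, so \<open>e \<curvearrowleft> K\<close> only sees the
  one-letter part of \<open>\<rho>(w)\<close>, and that part vanishes unless \<open>w\<close> itself has one letter.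
  For a single partition \<open>P\<close> of \<open>[n]\<close>, the only one-block coarsening is \<open>{[n]}\<close>, and
  \<open>P/{[n]} = P\<close>; hence \<open>(e \<curvearrowleft> K)(P) = K(P) = \<kappa>(P)\<close>. On all other words both sides
  vanish, \<open>\<kappa>\<close> being infinitesimal. Multiplicativity of \<open>K\<close> is never used: only its
  values on single generators enter.
\<close>

lemma finite_subset_mset: "finite {m1. m1 \<subseteq># (m::'b multiset)}"
proof (induction m)
  case empty
  then show ?case by simp
next
  case (add x m)
  have "m1 \<subseteq># m \<or> (\<exists>m2. m1 = add_mset x m2 \<and> m2 \<subseteq># m)" if "m1 \<subseteq># add_mset x m" for m1
    using that by (metis add_mset_add_single add_mset_remove_trivial_eq inter_add_left1
        subset_eq_diff_conv subset_mset.inf.absorb_iff2)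
  then have "{m1. m1 \<subseteq># add_mset x m} \<subseteq> {m1. m1 \<subseteq># m} \<union> add_mset x ` {m1. m1 \<subseteq># m}"
    by blast
  then show ?case using add.IH by (auto intro: finite_subset)
qed

lemma tmul_tone_right: "tmul x tone = x"
proof (intro ext, clarify)
  fix w m
  have "(\<Sum>m1\<in>{m1. m1 \<subseteq># m}. x (take i w, m1) * tone (drop i w, m - m1))
      = (if length w \<le> i then x (w, m) else 0)" for i
  proof -
    have "m - m1 = {#} \<longleftrightarrow> m1 = m" if "m1 \<subseteq># m" for m1
      using that by (metis subset_mset.add_diff_inverse add_0_right diff_cancel)
    then have "(\<Sum>m1\<in>{m1. m1 \<subseteq># m}. x (take i w, m1) * tone (drop i w, m - m1))
        = (\<Sum>m1\<in>{m1. m1 \<subseteq># m}. if m1 = m then (if length w \<le> i then x (w, m1) else 0) else 0)"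
      by (intro sum.cong) (auto simp: tone_def)
    then show ?thesis
      using finite_subset_mset[of m] by (simp add: sum.delta)
  qed
  then have "tmul x tone (w, m) = (\<Sum>i\<le>length w. if i = length w then x (w, m) else 0)"
    unfolding tmul_def by (auto intro: sum.cong)
  then show "tmul x tone (w, m) = x (w, m)" by simp
qed

lemma rho_Nil: "rho [] = tone"
  by (simp add: rho_def)

lemma rho_Cons: "rho (P # w) = tmul (rho_gen P) (rho w)"
  by (simp add: rho_def)

lemma rho_singleton: "rho [P] = rho_gen P"
  by (simp add: rho_Nil rho_Cons tmul_tone_right)

lemma rho_eq_0_if_length_neq: "length w' \<noteq> length w \<Longrightarrow> rho w (w', m) = (0::'a::field)"
proof (induction w arbitrary: w' m)
  case Nil
  then show ?case by (simp add: rho_Nil tone_def)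
next
  case (Cons P w)
  have terms_0: "rho_gen P (take i w', m1) * rho w (drop i w', m - m1) = (0::'a)" for i m1
  proof (cases "length (take i w') = 1")
    case True
    then have "length (drop i w') \<noteq> length w" using Cons.prems by auto
    then have "rho w (drop i w', m - m1) = (0::'a)" by (rule Cons.IH)
    then show ?thesis by simp
  next
    case False
    then have "rho_gen P (take i w', m1) = (0::'a)"
      unfolding rho_gen_def by (auto simp del: length_take dest: arg_cong[where f = length])
    then show ?thesis by simp
  qed
  show ?case unfolding rho_Cons tmul_def by (simp add: terms_0)
qed

lemma restr_self:
  assumes "ncp n P"
  shows "restr P {1..n} = P"
proof -
  have part: "is_partition {1..n} P" using assms by (simp add: ncp_def)
  then have sub: "x \<in> {1..n}" if "x \<in> B" and "B \<in> P" for x B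
    using that by (auto simp: is_partition_def)
  have rank_in_self: "rank_in {1..n} x = x" if "x \<in> {1..n}" for x
  proof -
    have "{y\<in>{1..n}. y < x} = {1..<x}" using that by auto
    then show ?thesis using that by (simp add: rank_in_def)
  qed
  have "B \<inter> {1..n} = B" and "rank_in {1..n} ` B = B" if "B \<in> P" for B
    using sub[OF _ that] rank_in_self by auto
  moreover have "{} \<notin> P" using part by (auto simp: is_partition_def)
  ultimately show ?thesis by (simp add: restr_def)
qed

lemma quot_one_block:
  assumes "ncp n P"
  shows "quot P {{1..n}} = {#P#}"
  using restr_self[OF assms] by (simp add: quot_def)

lemma ncp_one_block: "n \<ge> 1 \<Longrightarrow> ncp n {{1..n}}"
  by (auto simp: ncp_def is_partition_def noncrossing_def)

lemma one_block_coarsenings: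
  assumes "ncp n P" and "n \<ge> 1"
  shows "{Q \<in> coarsenings P. card Q = 1} = {{{1..n}}}"
proof -
  have "\<Union>P = {1..n}" using assms(1) by (simp add: ncp_def is_partition_def)
  then have "coarsenings P = {Q. ncp n Q \<and> refines P Q}" by (simp add: coarsenings_def)
  moreover have "ncp n {{1..n}}" using assms(2) by (rule ncp_one_block)
  moreover have "refines P {{1..n}}" using \<open>\<Union>P = {1..n}\<close> by (auto simp: refines_def)
  moreover have "Q = {{1..n}}" if "ncp n Q" and "card Q = 1" for Q
  proof -
    obtain C where "Q = {C}" using \<open>card Q = 1\<close> by (rule card_1_singletonE)
    moreover have "\<Union>Q = {1..n}" using \<open>ncp n Q\<close> by (simp add: ncp_def is_partition_def)
    ultimately show ?thesis by simp
  qed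
  moreover have "card {{1..n}} = 1" by simp
  ultimately show ?thesis by blast
qed

lemma e_one_eq_0_if_length_neq: "length w \<noteq> 1 \<Longrightarrow> e_one w = 0"
  by (auto simp: e_one_def)

lemma act_left_e_one_eq_0:
  assumes "length w \<noteq> 1"
  shows "act_left e_one phi w = 0"
proof -
  have "rho w (w', m) * e_one w' * phi m = 0" for w' m
    using assms rho_eq_0_if_length_neq[of w' w m] e_one_eq_0_if_length_neq[of w']
    by (cases "length w' = 1") auto
  then have "(\<lambda>(w', m). rho w (w', m) * e_one w' * phi m) = (\<lambda>_. 0)" by auto
  then show ?thesis by (simp add: act_left_def tensor_apply_def)
qed

lemma rho_gen_times_e_one:
  assumes "ncp n P" and "n \<ge> 1"
  shows "rho_gen P (w, m) * e_one w = (if (w, m) = ([{{1..n}}], {#P#}) then 1 else 0)"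
proof -
  define Q0 where "Q0 = {{1..n}}"
  have Q0: "{Q \<in> coarsenings P. card Q = 1} = {Q0}"
    unfolding Q0_def using assms by (rule one_block_coarsenings)
  have "nenc Q0" using assms(2) ncp_one_block by (auto simp: Q0_def nenc_def)
  have "quot P Q0 = {#P#}" unfolding Q0_def using assms(1) by (rule quot_one_block)
  have "(\<exists>Q. w = [Q] \<and> Q \<in> coarsenings P \<and> m = quot P Q \<and> nenc Q \<and> card Q = 1)
      \<longleftrightarrow> (w, m) = ([Q0], {#P#})"
  proof
    assume "\<exists>Q. w = [Q] \<and> Q \<in> coarsenings P \<and> m = quot P Q \<and> nenc Q \<and> card Q = 1"
    then obtain Q where Q: "w = [Q]" "m = quot P Q" "Q \<in> {Q \<in> coarsenings P. card Q = 1}"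
      by blast
    then have "Q = Q0" using Q0 by blast
    then show "(w, m) = ([Q0], {#P#})" using Q \<open>quot P Q0 = {#P#}\<close> by simp
  next
    assume "(w, m) = ([Q0], {#P#})"
    moreover have "Q0 \<in> coarsenings P" and "card Q0 = 1" using Q0 by auto
    ultimately show "\<exists>Q. w = [Q] \<and> Q \<in> coarsenings P \<and> m = quot P Q \<and> nenc Q \<and> card Q = 1"
      using \<open>nenc Q0\<close> \<open>quot P Q0 = {#P#}\<close> by auto
  qed
  moreover have "rho_gen P (w, m) * e_one w
      = (if \<exists>Q. w = [Q] \<and> Q \<in> coarsenings P \<and> m = quot P Q \<and> nenc Q \<and> card Q = 1
         then 1 else 0)"
    by (auto simp: rho_gen_def e_one_def)
  ultimately show ?thesis by (simp add: Q0_def)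
qed

lemma act_left_e_one_singleton:
  assumes "nenc P"
  shows "act_left e_one phi [P] = phi {#P#}"
proof -
  obtain n where "ncp n P" and "n \<ge> 1" using assms by (auto simp: nenc_def)
  note weight = rho_gen_times_e_one[OF this]
  have "(\<lambda>(w, m). rho_gen P (w, m) * e_one w * phi m)
      = (\<lambda>b. if b = ([{{1..n}}], {#P#}) then phi {#P#} else 0)"
    unfolding fun_eq_iff by (simp add: weight split: prod.split)
  then show ?thesis by (simp add: act_left_def tensor_apply_def rho_singleton)
qed

lemma inf_char_eq_0:
  assumes "inf_char f" and "valid_word w" and "length w \<noteq> 1"
  shows "f w = 0"
proof (cases w)
  case Nil
  then show ?thesis using assms(1) by (simp add: inf_char_def)
next
  case (Cons P v)
  then have "w = [P] @ v" and "v \<noteq> []" using assms(3) by auto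
  moreover have "valid_word [P]" and "valid_word v"
    using assms(2) Cons by (auto simp: valid_word_def)
  ultimately show ?thesis using assms(1) unfolding inf_char_def by blast
qed

theorem mainTheorem10:
  fixes kappa :: "ncpart list \<Rightarrow> 'a::field"
    and K :: "ncpart multiset \<Rightarrow> 'a"
  assumes "inf_char kappa"
    and "char_B K"
    and "\<forall>P. nenc P \<longrightarrow> K {#P#} = kappa [P]"
  shows "\<forall>w. valid_word w \<longrightarrow> kappa w = act_left e_one K w"
proof (intro allI impI)
  fix w :: "ncpart list"
  assume w: "valid_word w"
  show "kappa w = act_left e_one K w"
  proof (cases "length w = 1")
    case True
    then obtain P where "w = [P]" by (auto simp: length_Suc_conv)
    moreover have "nenc P" using w \<open>w = [P]\<close> by (simp add: valid_word_def)
    ultimately show ?thesis using assms(3) by (simp add: act_left_e_one_singleton)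
  next
    case False
    then show ?thesis
      using inf_char_eq_0[OF assms(1) w] act_left_e_one_eq_0 by simp
  qed
qed

end
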